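(* Let $G=(V,E)$ be a finite graph with a staggered quantum walk given by tessellations $\mathcal{T}_1,\dots,\mathcal{T}_l$ (each polygon $P$ carrying a unit vector $\ket{P}=\sum_{v\in P}c_v^{(P)}\ket{v}$ supported on $P$), with local operators $U_j=2\sum_{P\in\mathcal{T}_j}\ket{P}\bra{P}-I$ on $\mathcal{H}^{|V|}$. Fix a vertex $u\in V$, and for each $j$ let $P_j$ be the polygon of $\mathcal{T}_j$ containing $u$, with $\ket{P_j}=\sum_{v\in P_j}c_v^{(j)}\ket{v}$. Let $\tilde G=(\tilde V,\tilde E)$, $\tilde V=\{0,1,\dots,k-1\}\cup (V\setminus\{u\})$, be the graph obtained by replacing $u$ with a $k$-clique on new vertices $0,\dots,k-1$, each adjacent to every neighbour of $u$ in $G$. Fix a unit vector $\ket{\tilde u}=\sum_{i=0}^{k-1}u_i\ket{i}\in\mathcal{H}^{|\tilde V|}$. Define the staggered quantum walk on $\tilde G$ with tessellations $\tilde{\mathcal{T}}_j$ obtained from $\mathcal{T}_j$ by replacing $P_j$ with $\tilde P_j=(P_j\setminus\{u\})\cup\{0,\dots,k-1\}$ and keeping all other polygons, where $\ket{\tilde P_j}=\sum_{v\in P_j\setminus\{u\}}c_v^{(j)}\ket{v}+c_u^{(j)}\ket{\tilde u}$ and every other polygon keeps its vector; set $\tilde U_j=2\sum_{\tilde P\in\tilde{\mathcal{T}}_j}\ket{\tilde P}\bra{\tilde P}-I$ on $\mathcal{H}^{|\tilde V|}$. Let $\ket{\psi}=\sum_{v\in V}a_v\ket{v}\in\mathcal{H}^{|V|}$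 be arbitrary and define $\ket{\tilde\psi}=\sum_{v\in V\setminus\{u\}}a_v\ket{v}+a_u\ket{\tilde u}\in\mathcal{H}^{|\tilde V|}$. Then for every $j\in\{1,\dots,l\}$, $$\braket{v|\tilde U_j|\tilde\psi}=\braket{v|U_j|\psi}\quad\text{for all } v\in V\setminus\{u\},\qquad \braket{\tilde u|\tilde U_j|\tilde\psi}=\braket{u|U_j|\psi}.$$ In particular, the local operators preserve the amplitudes of all vertices outside the intersection, and the probability of measuring (in the computational basis) $u$ after applying $U_j$ to $\ket\psi$ equals the probability of measuring one of the clique vertices $0,\dots,k-1$ after applying $\tilde U_j$ to $\ket{\tilde\psi}$.
   Context: A tessellation of a graph is a partition of its vertex set into cliques, called polygons; a tessellation cover is a set of tessellations such that every edge has both endpoints in a common polygon of some tessellation. A staggered quantum walk (SQW) on a graph with tessellation cover $\{\mathcal{T}_1,\dots,\mathcal{T}_l\}$ assigns to each polygon $P$ a unit vector $\ket{P}$ in the Hilbert space spanned by the computational basis $\{\ket{v}\}$ of vertices, supported on the vertices of $P$; its local operators are the reflections $U_j=2\sum_{P\in\mathcal{T}_j}\ket P\bra P-I$ and its evolution operator is $U=U_1U_2\cdots U_l$. Since each tessellation is a partition, $u$ lies in exactly one polygon $P_j$ of each $\mathcal{T}_j$. The same pair of walks arises in the "intersection reduction" direction: a SQW on $\tilde G$ in which the $k$ vertices of an intersection $I=\tilde P_1\cap\dots\cap\tilde P_l$ have, in every $\ket{\tilde P_j}$, amplitudes proportional to a common unit vector $\ket{\tilde u}$ supported on $I$, is reduced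 by collapsing $I$ to a single vertex $u$ and replacing $\ket{\tilde u}$ by $\ket u$. Inner products are conjugate-linear in the first argument. *)

theory Defs
  imports Complex_Main
begin

definition simple_graph :: "'a set \<Rightarrow> ('a \<Rightarrow> 'a \<Rightarrow> bool) \<Rightarrow> bool" where
  "simple_graph V E \<longleftrightarrow> finite V \<and>
     (\<forall>x y. E x y \<longrightarrow> x \<in> V \<and> y \<in> V \<and> x \<noteq> y \<and> E y x)"

definition tessellation :: "'a set \<Rightarrow> ('a \<Rightarrow> 'a \<Rightarrow> bool) \<Rightarrow> 'a set set \<Rightarrow> bool" where
  "tessellation V E T \<longleftrightarrow>
     (\<forall>P\<in>T. P \<noteq> {} \<and> P \<subseteq> V) \<and> \<Union>T = V \<and>
     (\<forall>P\<in>T. \<forall>Q\<in>T. P \<noteq> Q \<longrightarrow> P \<inter> Q = {}) \<and>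
     (\<forall>P\<in>T. \<forall>x\<in>P. \<forall>y\<in>P. x \<noteq> y \<longrightarrow> E x y)"

definition tessellation_cover :: "'a set \<Rightarrow> ('a \<Rightarrow> 'a \<Rightarrow> bool) \<Rightarrow> 'a set set list \<Rightarrow> bool" where
  "tessellation_cover V E Ts \<longleftrightarrow>
     (\<forall>T\<in>set Ts. tessellation V E T) \<and>
     (\<forall>x y. E x y \<longrightarrow> (\<exists>T\<in>set Ts. \<exists>P\<in>T. x \<in> P \<and> y \<in> P))"

definition braket :: "'a set \<Rightarrow> ('a \<Rightarrow> complex) \<Rightarrow> ('a \<Rightarrow> complex) \<Rightarrow> complex" where
  "braket S x y = (\<Sum>v\<in>S. cnj (x v) * y v)"

definition polygon_vector :: "'a set \<Rightarrow> ('a \<Rightarrow> complex) \<Rightarrow> bool" where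
  "polygon_vector P c \<longleftrightarrow> (\<forall>v. v \<notin> P \<longrightarrow> c v = 0) \<and> (\<Sum>v\<in>P. (cmod (c v))\<^sup>2) = 1"

text \<open>Local operator U = 2 \<Sum>_{P\<in>T} |P\<rangle>\<langle>P| - I on the space indexed by V,
  applied to a vector psi; c P is the vector |P\<rangle> of polygon P.\<close>
definition local_op :: "'a set \<Rightarrow> 'a set set \<Rightarrow> ('a set \<Rightarrow> 'a \<Rightarrow> complex)
    \<Rightarrow> ('a \<Rightarrow> complex) \<Rightarrow> ('a \<Rightarrow> complex)" where
  "local_op V T c psi = (\<lambda>w. 2 * (\<Sum>P\<in>T. c P w * braket V (c P) psi) - psi w)"

text \<open>Vertex set of the expanded graph: Inl v for v \<in> V - {u}, Inr i for clique vertex i < k.\<close>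
definition tilde_vertices :: "'a set \<Rightarrow> 'a \<Rightarrow> nat \<Rightarrow> ('a + nat) set" where
  "tilde_vertices V u k = Inl ` (V - {u}) \<union> Inr ` {..<k}"

fun tilde_edges :: "('a \<Rightarrow> 'a \<Rightarrow> bool) \<Rightarrow> 'a \<Rightarrow> nat \<Rightarrow> ('a + nat) \<Rightarrow> ('a + nat) \<Rightarrow> bool" where
  "tilde_edges E u k (Inl x) (Inl y) = (E x y \<and> x \<noteq> u \<and> y \<noteq> u)"
| "tilde_edges E u k (Inl x) (Inr i) = (E x u \<and> i < k)"
| "tilde_edges E u k (Inr i) (Inl y) = (E u y \<and> i < k)"
| "tilde_edges E u k (Inr i) (Inr j) = (i \<noteq> j \<and> i < k \<and> j < k)"

definition lift_set :: "'a \<Rightarrow> nat \<Rightarrow> 'a set \<Rightarrow> ('a + nat) set" where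
  "lift_set u k P = (if u \<in> P then Inl ` (P - {u}) \<union> Inr ` {..<k} else Inl ` P)"

text \<open>Lifted vector: \<Sum>_{v \<noteq> u} x_v |v\<rangle> + x_u |ut\<rangle>.\<close>
definition lift_vec :: "'a \<Rightarrow> (nat \<Rightarrow> complex) \<Rightarrow> ('a \<Rightarrow> complex) \<Rightarrow> ('a + nat \<Rightarrow> complex)" where
  "lift_vec u ut x = (\<lambda>w. case w of Inl v \<Rightarrow> (if v = u then 0 else x v) | Inr i \<Rightarrow> x u * ut i)"

text \<open>The vector |ut\<rangle> viewed in the Hilbert space of the expanded graph.\<close>
definition clique_vec :: "(nat \<Rightarrow> complex) \<Rightarrow> ('a + nat \<Rightarrow> complex)" where
  "clique_vec ut = (\<lambda>w. case w of Inl _ \<Rightarrow> 0 | Inr i \<Rightarrow> ut i)"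

end

theory Submission
  imports Defs
begin

text \<open>Replacing the amplitude x(u) by x(u) times the unit vector ut on the clique is a
  linear map that preserves inner products. The lifted polygon vectors are the lifts of the
  original ones, so each inner product of a lifted polygon vector with the lifted state equals
  the original one, and the lifted local operator applied to the lifted state is the lift of
  the original local operator applied to the state. The components of a lift outside the
  clique, its component along ut and its weight on the clique are the amplitudes of the
  unlifted vector at the same vertex, resp. at u. Of the graph structure only finiteness of V is used: since
  \<^const>\<open>lift_set\<close> is injective on all sets, the sum over the lifted tessellation
  reindexes to the original one without any disjointness argument.\<close>

lemma sum_cnj_mult_self: "(\<Sum>i\<in>A. cnj (x i) * x i) = of_real (\<Sum>i\<in>A. (cmod (x i))\<^sup>2)"
  by (simp only: of_real_sum complex_norm_square mult.commute)

lemma braket_tilde_vertices: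
  assumes "finite V"
  shows "braket (tilde_vertices V u k) x y
    = (\<Sum>v\<in>V - {u}. cnj (x (Inl v)) * y (Inl v)) + (\<Sum>i<k. cnj (x (Inr i)) * y (Inr i))"
proof -
  have "braket (tilde_vertices V u k) x y
      = (\<Sum>w\<in>Inl ` (V - {u}). cnj (x w) * y w) + (\<Sum>w\<in>Inr ` {..<k}. cnj (x w) * y w)"
    unfolding braket_def tilde_vertices_def
    by (rule sum.union_disjoint) (use assms in auto)
  then show ?thesis
    by (simp add: sum.reindex)
qed

lemma braket_lift_vec:
  assumes "finite V" and "u \<in> V" and ut_unit: "(\<Sum>i<k. (cmod (ut i))\<^sup>2) = 1"
  shows "braket (tilde_vertices V u k) (lift_vec u ut x) (lift_vec u ut y) = braket V x y"
proof -
  have "(\<Sum>i<k. cnj (x u * ut i) * (y u * ut i)) = cnj (x u) * y u * (\<Sum>i<k. cnj (ut i) * ut i)"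
    by (simp add: sum_distrib_left algebra_simps)
  also have "\<dots> = cnj (x u) * y u"
    by (simp add: sum_cnj_mult_self ut_unit)
  finally show ?thesis
    using assms unfolding braket_tilde_vertices[OF assms(1)]
    by (simp add: braket_def lift_vec_def sum.remove add.commute)
qed

lemma braket_clique_vec_lift_vec:
  assumes "finite V" and ut_unit: "(\<Sum>i<k. (cmod (ut i))\<^sup>2) = 1"
  shows "braket (tilde_vertices V u k) (clique_vec ut) (lift_vec u ut x) = x u"
proof -
  have "(\<Sum>i<k. cnj (ut i) * (x u * ut i)) = x u * (\<Sum>i<k. cnj (ut i) * ut i)"
    by (simp add: sum_distrib_left algebra_simps)
  also have "\<dots> = x u"
    by (simp add: sum_cnj_mult_self ut_unit)
  finally show ?thesis
    using assms by (simp add: braket_tilde_vertices clique_vec_def lift_vec_def)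
qed

lemma sum_cmod_lift_vec_clique:
  assumes ut_unit: "(\<Sum>i<k. (cmod (ut i))\<^sup>2) = 1"
  shows "(\<Sum>i<k. (cmod (lift_vec u ut x (Inr i)))\<^sup>2) = (cmod (x u))\<^sup>2"
  by (simp add: lift_vec_def norm_mult power_mult_distrib flip: sum_distrib_left, simp add: ut_unit)

lemma inj_lift_set:
  assumes "k > 0"
  shows "inj (lift_set u k)"
proof (rule injI)
  fix P Q assume eq: "lift_set u k P = lift_set u k Q"
  have "u \<in> P \<longleftrightarrow> Inr 0 \<in> lift_set u k P" and "u \<in> Q \<longleftrightarrow> Inr 0 \<in> lift_set u k Q"
    using assms by (auto simp: lift_set_def)
  with eq have "u \<in> P \<longleftrightarrow> u \<in> Q" by simp
  moreover have "P - {u} = Q - {u}"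
    using eq by (auto simp: lift_set_def image_iff split: if_splits)
  ultimately show "P = Q" by blast
qed

lemma local_op_lift_vec:
  assumes "finite V" and "u \<in> V" and ut_unit: "(\<Sum>i<k. (cmod (ut i))\<^sup>2) = 1"
    and ct: "\<forall>P\<in>T. ct (lift_set u k P) = lift_vec u ut (c P)"
  shows "local_op (tilde_vertices V u k) (lift_set u k ` T) ct (lift_vec u ut psi)
    = lift_vec u ut (local_op V T c psi)"
proof
  fix w
  have "k > 0" using ut_unit by (cases k) auto
  then have "(\<Sum>P\<in>lift_set u k ` T. ct P w * braket (tilde_vertices V u k) (ct P) (lift_vec u ut psi))
      = (\<Sum>P\<in>T. lift_vec u ut (c P) w * braket V (c P) psi)"
    using ct braket_lift_vec[OF assms(1-3)]
    by (simp add: sum.reindex inj_on_subset[OF inj_lift_set])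
  then show "local_op (tilde_vertices V u k) (lift_set u k ` T) ct (lift_vec u ut psi) w
      = lift_vec u ut (local_op V T c psi) w"
    unfolding local_op_def
    by (cases w) (auto simp: lift_vec_def sum_distrib_left sum_distrib_right algebra_simps)
qed

theorem theorem1:
  fixes V :: "'a set" and E :: "'a \<Rightarrow> 'a \<Rightarrow> bool"
    and Ts :: "'a set set list"
    and c :: "nat \<Rightarrow> 'a set \<Rightarrow> 'a \<Rightarrow> complex"
    and u :: 'a and k :: nat and ut :: "nat \<Rightarrow> complex"
    and ct :: "nat \<Rightarrow> ('a + nat) set \<Rightarrow> ('a + nat) \<Rightarrow> complex"
    and psi :: "'a \<Rightarrow> complex" and j :: nat
  assumes graph: "simple_graph V E"
    and cover: "tessellation_cover V E Ts"
    and pvec: "\<forall>i < length Ts. \<forall>P \<in> Ts ! i. polygon_vector P (c i P)"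
    and uV: "u \<in> V"
    and ut_supp: "\<forall>i \<ge> k. ut i = 0"
    and ut_unit: "(\<Sum>i<k. (cmod (ut i))\<^sup>2) = 1"
    and ct_def: "\<forall>i < length Ts. \<forall>P \<in> Ts ! i. ct i (lift_set u k P) = lift_vec u ut (c i P)"
    and j: "j < length Ts"
  shows "(\<forall>v \<in> V - {u}.
            local_op (tilde_vertices V u k) (lift_set u k ` (Ts ! j)) (ct j) (lift_vec u ut psi) (Inl v)
            = local_op V (Ts ! j) (c j) psi v)
       \<and> braket (tilde_vertices V u k) (clique_vec ut)
            (local_op (tilde_vertices V u k) (lift_set u k ` (Ts ! j)) (ct j) (lift_vec u ut psi))
         = local_op V (Ts ! j) (c j) psi u
       \<and> (\<Sum>i<k. (cmod (local_op (tilde_vertices V u k) (lift_set u k ` (Ts ! j)) (ct j)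
                          (lift_vec u ut psi) (Inr i)))\<^sup>2)
         = (cmod (local_op V (Ts ! j) (c j) psi u))\<^sup>2"
proof -
  have fin: "finite V" using graph by (simp add: simple_graph_def)
  have "local_op (tilde_vertices V u k) (lift_set u k ` (Ts ! j)) (ct j) (lift_vec u ut psi)
      = lift_vec u ut (local_op V (Ts ! j) (c j) psi)"
    using ct_def j by (intro local_op_lift_vec[OF fin uV ut_unit]) simp
  then show ?thesis
    by (simp add: braket_clique_vec_lift_vec[OF fin ut_unit] sum_cmod_lift_vec_clique[OF ut_unit])
      (simp add: lift_vec_def)
qed

end
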